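(* Consider a floating-base serial chain of $N$ rigid bodies, as described in the context, in the absence of gravity. For $i=2,\ldots,N$ define the inertia-transfer subspace $$\mathcal{T}_i=\Big\{\delta\boldsymbol{\pi}\in\mathbb{R}^{10N}:\ \delta\mathbf{I}_{i-1}=-\big({}^{J_i}\mathbf{X}_{i-1}\big)^{\top}\delta\mathbf{I}_i\,{}^{J_i}\mathbf{X}_{i-1},\ \ \boldsymbol{\Phi}_i^{\top}\delta\mathbf{I}_i=\mathbf{0},\ \ (\boldsymbol{\Phi}_i\times)^{\top}\delta\mathbf{I}_i+\delta\mathbf{I}_i(\boldsymbol{\Phi}_i\times)=\mathbf{0},\ \ \delta\mathbf{I}_j=\mathbf{0}\text{ for } j\notin\{i,i-1\}\Big\},$$ where $\delta\mathbf{I}_j=[\delta\boldsymbol{\pi}_j]^{\wedge}$. Then the parameter nullspace satisfies $$\mathcal{N}=\bigoplus_{i=2}^{N}\mathcal{T}_i,$$ the direct sum of vector subspaces.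
   Context: Spatial notation. For $\mathbf{x}\in\mathbb{R}^3$, $\mathbf{S}(\mathbf{x})$ is the skew-symmetric matrix with $\mathbf{S}(\mathbf{x})\mathbf{y}=\mathbf{x}\times\mathbf{y}$. For a spatial vector $\mathbf{v}=[\boldsymbol{\omega};\mathbf{u}]\in\mathbb{R}^6$ ($\boldsymbol\omega,\mathbf u\in\mathbb R^3$), the spatial cross-product matrix is $(\mathbf{v}\times)=\begin{bmatrix}\mathbf{S}(\boldsymbol{\omega})&\mathbf{0}\\ \mathbf{S}(\mathbf{u})&\mathbf{S}(\boldsymbol{\omega})\end{bmatrix}\in\mathbb{R}^{6\times6}$. A spatial transform is a matrix $\begin{bmatrix}\mathbf{R}&\mathbf{0}\\-\mathbf{R}\mathbf{S}(\mathbf{p})&\mathbf{R}\end{bmatrix}$ with $\mathbf{R}\in SO(3)$, $\mathbf{p}\in\mathbb{R}^3$. The inertial parameters of a body are $\boldsymbol{\pi}=[m,h_x,h_y,h_z,I_{xx},I_{xy},I_{xz},I_{yy},I_{yz},I_{zz}]^\top\in\mathbb{R}^{10}$, and the (linear) map $[\cdot]^{\wedge}$ sends $\boldsymbol\pi$ to the spatial inertia $[\boldsymbol{\pi}]^{\wedge}=\begin{bmatrix}\bar{\mathbf{I}}&\mathbf{S}(\mathbf{h})\\ \mathbf{S}(\mathbf{h})^{\top}&m\mathbf{1}_3\end{bmatrix}$ with $\mathbf{h}=[h_x,h_y,h_z]^\top$ and $\bar{\mathbf{I}}$ the symmetric $3\times3$ matrix with entries $I_{xx},I_{xy},\ldots$;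 $[\cdot]^{\vee}$ is its inverse on the 10-dimensional space of such matrices. Floating-base chain. Bodies are numbered $1,\ldots,N$; body 1 (the floating base) has spatial velocity $\mathbf{v}_1\in\mathbb{R}^6$ that may take any value. For $i=2,\ldots,N$, joint $i$ is a single-DoF joint with coordinate $q_i\in\mathbb{R}$ connecting body $i-1$ to body $i$, with $\mathbf{v}_i={}^{i}\mathbf{X}_{i-1}(q_i)\mathbf{v}_{i-1}+\boldsymbol{\Phi}_i\dot q_i$, where $\boldsymbol{\Phi}_i\in\mathbb{R}^6$ is a fixed joint free-mode vector, ${}^{i}\mathbf{X}_{i-1}(q_i)={}^{i}\mathbf{X}_{J_i}(q_i)\,{}^{J_i}\mathbf{X}_{i-1}$, ${}^{J_i}\mathbf{X}_{i-1}$ is a constant spatial transform, and ${}^{i}\mathbf{X}_{J_i}(q_i)$ is a spatial transform with ${}^{i}\mathbf{X}_{J_i}(0)=\mathbf{1}_6$ and $\frac{d}{dq_i}{}^{i}\mathbf{X}_{J_i}(q_i)=-(\boldsymbol{\Phi}_i\times)\,{}^{i}\mathbf{X}_{J_i}(q_i)$. The full parameter vector is $\boldsymbol{\pi}=[\boldsymbol{\pi}_1^\top,\ldots,\boldsymbol{\pi}_N^\top]^\top\in\mathbb{R}^{10N}$, and the kinetic energy is $T=\frac12\sum_{j}\mathbf{v}_j^\top[\boldsymbol{\pi}_j]^{\wedge}\mathbf{v}_j$. The parameter nullspace $\mathcal{N}$ is the set of $\delta\boldsymbol{\pi}\in\mathbb{R}^{10N}$ such that $\sum_{j=1}^N\mathbf{v}_j^\top[\delta\boldsymbol{\pi}_j]^{\wedge}\mathbf{v}_j=0$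 for all $\mathbf{v}_1\in\mathbb{R}^6$ and all $q_i,\dot q_i$ ($i\ge2$); equivalently, the set of parameter changes leaving the mass matrix (and hence the gravity-free inverse dynamics, i.e. the regressor output $\mathbf Y(\mathbf q,\dot{\mathbf q},\ddot{\mathbf q})\delta\boldsymbol\pi$) unchanged for all states. *)

theory Defs
  imports "HOL-Analysis.Analysis" "HOL-Library.Numeral_Type"
begin

text \<open>Spatial vectors in R^6 are indexed by the type 3 + 3: index Inl k is the
  k-th angular component (omega), index Inr k the k-th linear component (u).\<close>

type_synonym sv = "real ^ (3 + 3)"
type_synonym smat = "real ^ (3 + 3) ^ (3 + 3)"

definition skew :: "real^3 \<Rightarrow> real^3^3" where
  "skew x = matrix (\<lambda>y. cross3 x y)"

definition blk :: "real^3^3 \<Rightarrow> real^3^3 \<Rightarrow> real^3^3 \<Rightarrow> real^3^3 \<Rightarrow> smat" where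
  "blk A B C D = (\<chi> i j. case i of
       Inl a \<Rightarrow> (case j of Inl b \<Rightarrow> A $ a $ b | Inr b \<Rightarrow> B $ a $ b)
     | Inr a \<Rightarrow> (case j of Inl b \<Rightarrow> C $ a $ b | Inr b \<Rightarrow> D $ a $ b))"

definition sv_ang :: "sv \<Rightarrow> real^3" where "sv_ang v = (\<chi> k. v $ Inl k)"
definition sv_lin :: "sv \<Rightarrow> real^3" where "sv_lin v = (\<chi> k. v $ Inr k)"

definition svcross :: "sv \<Rightarrow> smat" where
  "svcross v = blk (skew (sv_ang v)) 0 (skew (sv_lin v)) (skew (sv_ang v))"

definition is_stransform :: "smat \<Rightarrow> bool" where
  "is_stransform X \<longleftrightarrow> (\<exists>R p. rotation_matrix R \<and> X = blk R 0 (- (R ** skew p)) R)"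

text \<open>Inertial parameters pi = [m,hx,hy,hz,Ixx,Ixy,Ixz,Iyy,Iyz,Izz] indexed 0..9, and the
  hat map to the spatial inertia [Ibar S(h); S(h)^T m 1].\<close>
definition inertia_hat :: "real^10 \<Rightarrow> smat" where
  "inertia_hat p =
     (let m = p $ 0;
          h = vector [p $ 1, p $ 2, p $ 3] :: real^3;
          Ib = vector [vector [p $ 4, p $ 5, p $ 6],
                       vector [p $ 5, p $ 7, p $ 8],
                       vector [p $ 6, p $ 8, p $ 9]] :: real^3^3
      in blk Ib (skew h) (transpose (skew h)) (m *\<^sub>R mat 1))"

text \<open>Full parameter vectors in R^{10N}: functions on body indices, zero outside 1..N.\<close>
definition params :: "nat \<Rightarrow> (nat \<Rightarrow> real^10) set" where
  "params N = {dp. \<forall>j. j \<notin> {1..N} \<longrightarrow> dp j = 0}"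

fun vel :: "(nat \<Rightarrow> sv) \<Rightarrow> (nat \<Rightarrow> smat) \<Rightarrow> (nat \<Rightarrow> real \<Rightarrow> smat)
            \<Rightarrow> sv \<Rightarrow> (nat \<Rightarrow> real) \<Rightarrow> (nat \<Rightarrow> real) \<Rightarrow> nat \<Rightarrow> sv" where
  "vel Phi XJ Xq v1 q qd 0 = v1"
| "vel Phi XJ Xq v1 q qd (Suc 0) = v1"
| "vel Phi XJ Xq v1 q qd (Suc (Suc k)) =
     (Xq (Suc (Suc k)) (q (Suc (Suc k))) ** XJ (Suc (Suc k))) *v vel Phi XJ Xq v1 q qd (Suc k)
     + qd (Suc (Suc k)) *\<^sub>R Phi (Suc (Suc k))"

definition param_nullspace ::
  "nat \<Rightarrow> (nat \<Rightarrow> sv) \<Rightarrow> (nat \<Rightarrow> smat) \<Rightarrow> (nat \<Rightarrow> real \<Rightarrow> smat) \<Rightarrow> (nat \<Rightarrow> real^10) set" where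
  "param_nullspace N Phi XJ Xq =
     {dp \<in> params N. \<forall>v1 q qd.
        (\<Sum>j=1..N. vel Phi XJ Xq v1 q qd j \<bullet> (inertia_hat (dp j) *v vel Phi XJ Xq v1 q qd j)) = 0}"

definition transfer_space ::
  "nat \<Rightarrow> (nat \<Rightarrow> sv) \<Rightarrow> (nat \<Rightarrow> smat) \<Rightarrow> nat \<Rightarrow> (nat \<Rightarrow> real^10) set" where
  "transfer_space N Phi XJ i =
     {dp \<in> params N.
        inertia_hat (dp (i - 1)) = - (transpose (XJ i) ** inertia_hat (dp i) ** XJ i)
      \<and> Phi i v* inertia_hat (dp i) = 0
      \<and> transpose (svcross (Phi i)) ** inertia_hat (dp i) + inertia_hat (dp i) ** svcross (Phi i) = 0
      \<and> (\<forall>j\<in>{1..N}. j \<notin> {i, i - 1} \<longrightarrow> inertia_hat (dp j) = 0)}"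

definition is_direct_sum :: "(nat \<Rightarrow> real^10) set \<Rightarrow> (nat \<Rightarrow> (nat \<Rightarrow> real^10) set) \<Rightarrow> nat set \<Rightarrow> bool" where
  "is_direct_sum V W I \<longleftrightarrow>
     V = {(\<lambda>j. \<Sum>i\<in>I. t i j) | t. \<forall>i\<in>I. t i \<in> W i}
   \<and> (\<forall>t. (\<forall>i\<in>I. t i \<in> W i) \<and> (\<lambda>j. \<Sum>i\<in>I. t i j) = (\<lambda>j. 0) \<longrightarrow> (\<forall>i\<in>I. t i = (\<lambda>j. 0)))"

end

theory Submission
  imports Defs
begin

text \<open>A change of inertial parameters in \<open>T\<^sub>i\<close> is invisible to the kinetic energy: the
  condition on \<open>\<Phi>\<^sub>i\<close> removes the terms in the joint rate, the commutation condition makes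
  \<open>\<delta>I\<^sub>i\<close> invariant under the joint motion, which solves \<open>X' = -(\<Phi>\<^sub>i\<times>) X\<close>, and
  the change on body \<open>i - 1\<close> cancels what remains after pulling \<open>\<delta>I\<^sub>i\<close> back through
  the joint transform.
  Conversely, let \<open>K\<close> be the outermost body carrying a change in the nullspace. Its joint
  coordinates move only body \<open>K\<close>, whose velocity can be arbitrary, so the quadratic form of
  \<open>\<delta>I\<^sub>K\<close> is invariant under \<open>v \<mapsto> X(q\<^sub>K) v + q\<^sub>K' \<Phi>\<^sub>K\<close>; this forces the two
  conditions of \<open>T\<^sub>K\<close>. Transferring \<open>\<delta>I\<^sub>K\<close> to body \<open>K - 1\<close> leaves a nullspace element
  supported on fewer bodies, and at the base the free velocity \<open>v\<^sub>1\<close> forces the rest to vanish.\<close>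

section \<open>Matrices and quadratic forms\<close>

lemma matrix_add_rdistrib: "((A::'a::semiring_1^'n^'m) + B) ** C = A ** C + B ** C"
  by (simp add: matrix_matrix_mult_def vec_eq_iff distrib_right sum.distrib)

lemma matrix_mul_minus_left: "(- (A::'a::ring_1^'n^'m)) ** B = - (A ** B)"
  by (simp add: matrix_matrix_mult_def vec_eq_iff sum_negf)

lemma matrix_mul_minus_right: "(A::'a::ring_1^'n^'m) ** (- B) = - (A ** B)"
  by (simp add: matrix_matrix_mult_def vec_eq_iff sum_negf)

lemma transpose_add: "transpose (A + B) = transpose A + transpose (B::'a::plus^'n^'m)"
  by (simp add: transpose_def vec_eq_iff)

lemma transpose_uminus: "transpose (- A) = - transpose (A::'a::uminus^'n^'m)"
  by (simp add: transpose_def vec_eq_iff)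

lemma transpose_diff: "transpose (A - B) = transpose A - transpose (B::'a::minus^'n^'m)"
  by (simp add: transpose_def vec_eq_iff)

lemma transpose_zero [simp]: "transpose (0::'a::zero^'n^'m) = 0"
  by (simp add: transpose_def vec_eq_iff)

lemma matrix_vector_mult_minus_left: "(- (A::'a::ring_1^'n^'m)) *v x = - (A *v x)"
  by (simp add: matrix_vector_mult_def vec_eq_iff sum_negf)

lemma matrix_vector_mult_sum_left: "(\<Sum>i\<in>I. M i) *v x = (\<Sum>i\<in>I. M i *v x)"
  by (induction I rule: infinite_finite_induct) (simp_all add: matrix_vector_mult_add_rdistrib)

lemma bounded_bilinear_matrix_mult:
  "bounded_bilinear (\<lambda>(A::real^'n^'m) (B::real^'p^'n). A ** B)"
proof -
  have "bilinear (\<lambda>(A::real^'n^'m) (B::real^'p^'n). A ** B)"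
    by (auto intro!: linearI simp: bilinear_def matrix_add_rdistrib matrix_add_ldistrib
        scalar_matrix_assoc matrix_scalar_ac)
  then show ?thesis
    by (rule bilinear_conv_bounded_bilinear[THEN iffD1])
qed

lemma bounded_linear_transpose: "bounded_linear (transpose :: real^'n^'m \<Rightarrow> real^'m^'n)"
  by (auto intro!: linearI simp: linear_conv_bounded_linear[symmetric] transpose_add transpose_scalar)

lemma has_vector_derivative_congruence:
  fixes X :: "real \<Rightarrow> real^'n^'m"
  assumes "(X has_vector_derivative D) (at x)"
  shows "((\<lambda>x. transpose (X x) ** A ** X x) has_vector_derivative
           transpose D ** A ** X x + transpose (X x) ** A ** D) (at x)"
proof -
  have "((\<lambda>x. transpose (X x) ** A) has_vector_derivative transpose D ** A) (at x)"
    using bounded_bilinear.has_vector_derivative[OF bounded_bilinear_matrix_mult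
        bounded_linear.has_vector_derivative[OF bounded_linear_transpose assms]
        has_vector_derivative_const]
    by simp
  from bounded_bilinear.has_vector_derivative[OF bounded_bilinear_matrix_mult this assms]
  show ?thesis
    by (simp add: add.commute)
qed

lemma congruence_invariant_iff:
  fixes X :: "real \<Rightarrow> real^'n^'n"
  assumes ode: "\<And>x. (X has_vector_derivative - (P ** X x)) (at x)" and X0: "X 0 = mat 1"
  shows "(\<forall>x. transpose (X x) ** A ** X x = A) \<longleftrightarrow> transpose P ** A + A ** P = 0"
proof -
  have deriv: "((\<lambda>x. transpose (X x) ** A ** X x) has_vector_derivative
      - (transpose (X x) ** (transpose P ** A + A ** P) ** X x)) (at x)" for x
    using has_vector_derivative_congruence[OF ode[of x], of A]
    by (simp add: transpose_uminus matrix_transpose_mul matrix_mul_minus_left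
        matrix_mul_minus_right matrix_add_ldistrib matrix_add_rdistrib matrix_mul_assoc)
  show ?thesis
  proof
    assume "\<forall>x. transpose (X x) ** A ** X x = A"
    then have "((\<lambda>x. transpose (X x) ** A ** X x) has_vector_derivative 0) (at 0)"
      by (simp add: has_vector_derivative_const)
    from vector_derivative_unique_at[OF deriv this] X0
    show "transpose P ** A + A ** P = 0"
      by (simp add: neg_eq_iff_add_eq_0)
  next
    assume "transpose P ** A + A ** P = 0"
    then obtain C where "\<And>x. transpose (X x) ** A ** X x = C"
      using has_vector_derivative_zero_constant[of UNIV "\<lambda>x. transpose (X x) ** A ** X x"] deriv
      by auto
    then show "\<forall>x. transpose (X x) ** A ** X x = A"
      using X0 by (metis matrix_mul_lid matrix_mul_rid transpose_mat)
  qed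
qed

lemma symmetric_matrix_inner_commute:
  fixes A :: "real^'n^'n"
  assumes "transpose A = A"
  shows "u \<bullet> (A *v v) = v \<bullet> (A *v u)"
  by (metis assms dot_lmul_matrix inner_commute transpose_matrix_vector)

lemma symmetric_quadratic_form_eq_0:
  fixes A :: "real^'n^'n"
  assumes sym: "transpose A = A" and form: "\<And>v. v \<bullet> (A *v v) = 0"
  shows "A = 0"
proof -
  have "u \<bullet> (A *v v) = 0" for u v
    using form[of "u + v"] form[of u] form[of v] symmetric_matrix_inner_commute[OF sym, of u v]
    by (simp add: matrix_vector_right_distrib inner_add_left inner_add_right)
  then have "A *v v = 0" for v
    using inner_eq_zero_iff by blast
  then show ?thesis
    by (simp add: matrix_eq)
qed

lemma quadratic_form_congruence:
  "(X *v u) \<bullet> (A *v (X *v u)) = u \<bullet> ((transpose X ** A ** X) *v (u::real^'n))"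
proof -
  have "u \<bullet> ((transpose X ** A ** X) *v u) = u \<bullet> (transpose X *v (A *v (X *v u)))"
    by (simp add: matrix_vector_mul_assoc matrix_mul_assoc)
  also have "\<dots> = (X *v u) \<bullet> (A *v (X *v u))"
    by (metis dot_lmul_matrix vector_transpose_matrix)
  finally show ?thesis ..
qed

lemma quadratic_form_add_scaleR:
  fixes A :: "real^'n^'n"
  assumes "transpose A = A"
  shows "(u + c *\<^sub>R p) \<bullet> (A *v (u + c *\<^sub>R p)) =
         u \<bullet> (A *v u) + 2 * c * (p \<bullet> (A *v u)) + c * c * (p \<bullet> (A *v p))"
  using symmetric_matrix_inner_commute[OF assms, of u p]
  by (simp add: matrix_vector_right_distrib matrix_vector_mult_scaleR inner_add_left
      inner_add_right algebra_simps)

lemma quadratic_form_joint_invariant: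
  fixes A :: "real^'n^'n"
  assumes sym: "transpose A = A" and Phi: "Phi v* A = 0" and inv: "transpose X ** A ** X = A"
  shows "(X *v u + s *\<^sub>R Phi) \<bullet> (A *v (X *v u + s *\<^sub>R Phi)) = u \<bullet> (A *v u)"
proof -
  have Phi_A: "Phi \<bullet> (A *v y) = 0" for y
    by (metis Phi dot_lmul_matrix inner_zero_left)
  have "(X *v u + s *\<^sub>R Phi) \<bullet> (A *v (X *v u + s *\<^sub>R Phi)) =
      (X *v u) \<bullet> (A *v (X *v u)) + 2 * s * (Phi \<bullet> (A *v (X *v u))) + s * s * (Phi \<bullet> (A *v Phi))"
    by (rule quadratic_form_add_scaleR[OF sym])
  also have "\<dots> = u \<bullet> ((transpose X ** A ** X) *v u)"
    by (simp only: Phi_A quadratic_form_congruence)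
  finally show ?thesis
    by (simp only: inv)
qed

section \<open>Block matrices and spatial inertias\<close>

lemma blk_nth:
  "blk A B C D $ Inl a $ Inl b = A $ a $ b" "blk A B C D $ Inl a $ Inr b = B $ a $ b"
  "blk A B C D $ Inr a $ Inl b = C $ a $ b" "blk A B C D $ Inr a $ Inr b = D $ a $ b"
  by (simp_all add: blk_def)

lemma blk_eq_iff: "blk A B C D = blk A' B' C' D' \<longleftrightarrow> A = A' \<and> B = B' \<and> C = C' \<and> D = D'"
  by (auto simp: vec_eq_iff split_sum_all blk_nth)

lemma blk_mult:
  "blk A B C D ** blk E F G H = blk (A ** E + B ** G) (A ** F + B ** H) (C ** E + D ** G) (C ** F + D ** H)"
  by (simp add: vec_eq_iff split_sum_all blk_nth matrix_matrix_mult_def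
      UNIV_Plus_UNIV[symmetric] sum.Plus o_def del: UNIV_Plus_UNIV)

lemma transpose_blk:
  "transpose (blk A B C D) = blk (transpose A) (transpose C) (transpose B) (transpose D)"
  by (simp add: vec_eq_iff split_sum_all blk_nth transpose_def)

lemma mat_1_eq_blk: "(mat 1 :: smat) = blk (mat 1) 0 0 (mat 1)"
  by (simp add: vec_eq_iff split_sum_all blk_nth mat_def)

lemma skew_eq:
  "skew x = vector [vector [0, - x$3, x$2], vector [x$3, 0, - x$1], vector [- x$2, x$1, 0]]"
  by (simp add: skew_def vec_eq_iff forall_3 matrix_def cross3_def axis_def)

lemma transpose_skew: "transpose (skew x) = - skew x"
  by (simp add: skew_eq vec_eq_iff forall_3 transpose_def)

lemma stransform_right_inverse:
  assumes "is_stransform X"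
  shows "\<exists>Y. X ** Y = mat 1"
proof -
  obtain R p where R: "rotation_matrix R" and X: "X = blk R 0 (- (R ** skew p)) R"
    using assms unfolding is_stransform_def by blast
  have "R ** transpose R = mat 1"
    using R by (simp add: rotation_matrix_def orthogonal_matrix_def)
  then have "X ** blk (transpose R) 0 (skew p ** transpose R) (transpose R) = mat 1"
    by (simp add: X mat_1_eq_blk blk_mult matrix_mul_assoc matrix_mul_minus_left)
  then show ?thesis ..
qed

definition rot_inertia :: "real^10 \<Rightarrow> real^3^3" where
  "rot_inertia p = vector [vector [p $ 4, p $ 5, p $ 6], vector [p $ 5, p $ 7, p $ 8],
                           vector [p $ 6, p $ 8, p $ 9]]"

definition first_moment :: "real^10 \<Rightarrow> real^3" where
  "first_moment p = vector [p $ 1, p $ 2, p $ 3]"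

lemma inertia_hat_eq_blk:
  "inertia_hat p = blk (rot_inertia p) (skew (first_moment p)) (transpose (skew (first_moment p)))
                       ((p $ 0) *\<^sub>R mat 1)"
  by (simp add: inertia_hat_def rot_inertia_def first_moment_def Let_def)

lemma linear_inertia_hat: "linear inertia_hat"
  by (rule linearI)
    (simp_all add: inertia_hat_def Let_def blk_def vec_eq_iff split_sum_all forall_3
      skew_eq transpose_def mat_def algebra_simps)

lemmas inertia_hat_0 [simp] = linear_0[OF linear_inertia_hat]

lemma transpose_rot_inertia: "transpose (rot_inertia p) = rot_inertia p"
  by (simp add: rot_inertia_def vec_eq_iff forall_3 transpose_def)

lemma transpose_inertia_hat [simp]: "transpose (inertia_hat p) = inertia_hat p"
  by (simp add: inertia_hat_eq_blk transpose_blk transpose_scalar transpose_rot_inertia)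

lemma exhaust_10:
  fixes i :: 10
  shows "i = 0 \<or> i = 1 \<or> i = 2 \<or> i = 3 \<or> i = 4 \<or> i = 5 \<or> i = 6 \<or> i = 7 \<or> i = 8 \<or> i = 9"
proof (induct i)
  case (of_int z)
  then have "z = 0 \<or> z = 1 \<or> z = 2 \<or> z = 3 \<or> z = 4 \<or> z = 5 \<or> z = 6 \<or> z = 7 \<or> z = 8 \<or> z = 9"
    by simp presburger
  then show ?case
    by auto
qed

lemma forall_10:
  "(\<forall>i::10. P i) \<longleftrightarrow> P 0 \<and> P 1 \<and> P 2 \<and> P 3 \<and> P 4 \<and> P 5 \<and> P 6 \<and> P 7 \<and> P 8 \<and> P 9"
  by (metis exhaust_10)

lemma inertia_hat_eq_0_iff [simp]: "inertia_hat p = 0 \<longleftrightarrow> p = 0"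
proof
  assume "inertia_hat p = 0"
  then have entry: "inertia_hat p $ i $ j = 0" for i j
    by simp
  have "p $ 0 = 0"
    using entry[of "Inr 1" "Inr 1"] by (simp add: inertia_hat_eq_blk blk_nth mat_def)
  moreover have "p $ 1 = 0" "p $ 2 = 0" "p $ 3 = 0"
    using entry[of "Inl 3" "Inr 2"] entry[of "Inl 1" "Inr 3"] entry[of "Inl 2" "Inr 1"]
    by (simp_all add: inertia_hat_eq_blk blk_nth first_moment_def skew_eq)
  moreover have "p $ 4 = 0" "p $ 5 = 0" "p $ 6 = 0" "p $ 7 = 0" "p $ 8 = 0" "p $ 9 = 0"
    using entry[of "Inl 1" "Inl 1"] entry[of "Inl 1" "Inl 2"] entry[of "Inl 1" "Inl 3"]
      entry[of "Inl 2" "Inl 2"] entry[of "Inl 2" "Inl 3"] entry[of "Inl 3" "Inl 3"]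
    by (simp_all add: inertia_hat_eq_blk blk_nth rot_inertia_def)
  ultimately show "p = 0"
    by (simp add: vec_eq_iff forall_10)
qed simp

lemma ex_inertia_hat_eq_blk:
  assumes B: "transpose B = B" and S: "transpose S = - S"
  shows "\<exists>p. inertia_hat p = blk B S (transpose S) (c *\<^sub>R mat 1)"
proof -
  have B_sym: "B $ j $ i = B $ i $ j" for i j
    using arg_cong[OF B, of "\<lambda>M. M $ i $ j"] by (simp add: transpose_def)
  have S_skew: "S $ j $ i = - S $ i $ j" for i j
    using arg_cong[OF S, of "\<lambda>M. M $ i $ j"] by (simp add: transpose_def)
  define p :: "real^10" where
    "p = (\<chi> k. if k = 0 then c else if k = 1 then S$3$2 else if k = 2 then S$1$3
              else if k = 3 then S$2$1 else if k = 4 then B$1$1 else if k = 5 then B$1$2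
              else if k = 6 then B$1$3 else if k = 7 then B$2$2 else if k = 8 then B$2$3
              else B$3$3)"
  have p: "p $ 0 = c" "p $ 1 = S$3$2" "p $ 2 = S$1$3" "p $ 3 = S$2$1" "p $ 4 = B$1$1"
    "p $ 5 = B$1$2" "p $ 6 = B$1$3" "p $ 7 = B$2$2" "p $ 8 = B$2$3" "p $ 9 = B$3$3"
    by (simp_all add: p_def)
  have "rot_inertia p = B"
    by (simp add: rot_inertia_def p vec_eq_iff forall_3 B_sym[of 1 2] B_sym[of 1 3] B_sym[of 2 3])
  moreover have "skew (first_moment p) = S"
  proof -
    have "S $ i $ i = 0" for i
      using S_skew[of i i] by simp
    then show ?thesis
      by (simp add: skew_eq first_moment_def p vec_eq_iff forall_3
          S_skew[of 2 3] S_skew[of 3 1] S_skew[of 1 2])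
  qed
  ultimately have "inertia_hat p = blk B S (transpose S) (c *\<^sub>R mat 1)"
    by (simp add: inertia_hat_eq_blk p)
  then show ?thesis ..
qed

lemma ex_inertia_hat_congruence:
  assumes "is_stransform X"
  shows "\<exists>p'. inertia_hat p' = transpose X ** inertia_hat p ** X"
proof -
  obtain R r where R: "rotation_matrix R" and X: "X = blk R 0 (- (R ** skew r)) R"
    using assms unfolding is_stransform_def by blast
  have RR: "transpose R ** R = mat 1"
    using R by (simp add: rotation_matrix_def orthogonal_matrix_def)
  define C where "C = - (R ** skew r)"
  define S where "S = skew (first_moment p)"
  define M where "M = (p $ 0) *\<^sub>R (mat 1 :: real^3^3)"
  define A1 where "A1 = (transpose R ** rot_inertia p + transpose C ** transpose S) ** R
                      + (transpose R ** S + transpose C ** M) ** C"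
  define A2 where "A2 = (transpose R ** S + transpose C ** M) ** R"
  define A3 where "A3 = (transpose R ** transpose S) ** R + (transpose R ** M) ** C"
  have blocks: "transpose X ** inertia_hat p ** X = blk A1 A2 A3 ((transpose R ** M) ** R)"
    unfolding X inertia_hat_eq_blk A1_def A2_def A3_def C_def S_def M_def
    by (simp add: transpose_blk blk_mult)
  have "transpose (transpose X ** inertia_hat p ** X) = transpose X ** inertia_hat p ** X"
    by (simp add: matrix_transpose_mul matrix_mul_assoc)
  then have A1: "transpose A1 = A1" and A3: "A3 = transpose A2"
    unfolding blocks by (auto simp: transpose_blk blk_eq_iff)
  have "transpose C ** R = skew r"
    by (simp add: C_def transpose_uminus matrix_transpose_mul matrix_mul_minus_left
        transpose_skew matrix_mul_assoc[symmetric] RR)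
  then have A2: "A2 = transpose R ** S ** R + (p $ 0) *\<^sub>R skew r"
    by (simp add: A2_def M_def matrix_add_rdistrib matrix_scalar_ac
        scalar_matrix_assoc[symmetric] matrix_mul_assoc[symmetric])
  have "transpose A2 = - A2"
    by (simp add: A2 S_def transpose_add transpose_scalar matrix_transpose_mul transpose_skew
        matrix_mul_minus_left matrix_mul_minus_right matrix_mul_assoc)
  moreover have "(transpose R ** M) ** R = (p $ 0) *\<^sub>R mat 1"
    by (simp add: M_def matrix_scalar_ac scalar_matrix_assoc[symmetric] RR)
  ultimately show ?thesis
    using ex_inertia_hat_eq_blk[OF A1, of A2 "p $ 0"] blocks A3 by metis
qed

section \<open>Inertia-transfer subspaces\<close>

lemma transfer_space_add:
  assumes "s \<in> transfer_space N Phi XJ i" and "t \<in> transfer_space N Phi XJ i"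
  shows "(\<lambda>j. s j + t j) \<in> transfer_space N Phi XJ i"
proof -
  have "transpose P ** (A + B) + (A + B) ** P =
          (transpose P ** A + A ** P) + (transpose P ** B + B ** P)"
    and "transpose X ** (A + B) ** X = transpose X ** A ** X + transpose X ** B ** X"
    for P X A B :: smat
    by (simp_all add: matrix_add_ldistrib matrix_add_rdistrib algebra_simps)
  with assms show ?thesis
    by (simp add: transfer_space_def params_def linear_add[OF linear_inertia_hat]
        vector_matrix_mult_add_rdistrib)
qed

definition transfer_sums :: "nat \<Rightarrow> (nat \<Rightarrow> sv) \<Rightarrow> (nat \<Rightarrow> smat) \<Rightarrow> (nat \<Rightarrow> real^10) set" where
  "transfer_sums N Phi XJ =
     {(\<lambda>j. \<Sum>i\<in>{2..N}. t i j) | t. \<forall>i\<in>{2..N}. t i \<in> transfer_space N Phi XJ i}"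

lemma zero_mem_transfer_sums: "(\<lambda>j. 0) \<in> transfer_sums N Phi XJ"
proof -
  have "(\<lambda>j. 0) \<in> transfer_space N Phi XJ i" for i
    by (simp add: transfer_space_def params_def)
  then show ?thesis
    unfolding transfer_sums_def by (intro CollectI exI[of _ "\<lambda>i j. 0"]) simp
qed

lemma transfer_sums_add_transfer:
  assumes dp: "dp \<in> transfer_sums N Phi XJ" and K: "K \<in> {2..N}" and s: "s \<in> transfer_space N Phi XJ K"
  shows "(\<lambda>j. dp j + s j) \<in> transfer_sums N Phi XJ"
proof -
  obtain t where t: "\<forall>i\<in>{2..N}. t i \<in> transfer_space N Phi XJ i"
    and dp_t: "dp = (\<lambda>j. \<Sum>i\<in>{2..N}. t i j)"
    using dp unfolding transfer_sums_def by blast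
  define t' where "t' i = (if i = K then (\<lambda>j. t i j + s j) else t i)" for i
  have "\<forall>i\<in>{2..N}. t' i \<in> transfer_space N Phi XJ i"
    using t s by (simp add: t'_def transfer_space_add)
  moreover have "(\<lambda>j. dp j + s j) = (\<lambda>j. \<Sum>i\<in>{2..N}. t' i j)"
  proof
    fix j
    have "(\<Sum>i\<in>{2..N}. t' i j) = (\<Sum>i\<in>{2..N}. t i j + (if i = K then s j else 0))"
      by (intro sum.cong) (auto simp: t'_def)
    then show "dp j + s j = (\<Sum>i\<in>{2..N}. t' i j)"
      using K by (simp add: dp_t sum.distrib)
  qed
  ultimately show ?thesis
    unfolding transfer_sums_def by blast
qed

text \<open>Once the components of index above i vanish, only the component in \<open>T\<^sub>i\<close> can touch
  body i; the defining relation of \<open>T\<^sub>i\<close> then also clears its entry on body i - 1.\<close>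

lemma transfer_sum_eq_0:
  assumes T: "\<forall>i\<in>{2..N}. t i \<in> transfer_space N Phi XJ i"
    and sum: "(\<lambda>j. \<Sum>i\<in>{2..N}. t i j) = (\<lambda>j. 0)"
    and i: "i \<in> {2..N}"
  shows "t i = (\<lambda>j. 0)"
  using i
proof (induction "N - i" arbitrary: i rule: less_induct)
  case less
  have Ti: "t i \<in> transfer_space N Phi XJ i"
    using T less.prems by blast
  have others: "t i' i = 0" if "i' \<in> {2..N}" "i' \<noteq> i" for i'
  proof (cases "i < i'")
    case True
    then show ?thesis
      using less.hyps[of i'] less.prems that by auto
  next
    case False
    then show ?thesis
      using T that less.prems unfolding transfer_space_def by auto
  qed
  have "t i i = (\<Sum>i'\<in>{2..N}. t i' i)"
    using less.prems others by (simp add: sum.remove)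
  then have tii: "t i i = 0"
    using fun_cong[OF sum, of i] by simp
  then have "t i (i - 1) = 0"
    using Ti unfolding transfer_space_def by simp
  with Ti tii show ?case
    unfolding transfer_space_def params_def by (auto simp: fun_eq_iff)
qed

section \<open>The floating-base chain\<close>

lemma vel_step:
  "2 \<le> k \<Longrightarrow> vel Phi XJ Xq v1 q qd k =
     (Xq k (q k) ** XJ k) *v vel Phi XJ Xq v1 q qd (k - 1) + qd k *\<^sub>R Phi k"
proof -
  assume "2 \<le> k"
  then obtain k' where "k = Suc (Suc k')"
    by (metis add_2_eq_Suc le_Suc_ex)
  then show ?thesis
    by simp
qed

lemma vel_cong:
  "(\<And>k. k \<le> j \<Longrightarrow> q k = q' k) \<Longrightarrow> (\<And>k. k \<le> j \<Longrightarrow> qd k = qd' k) \<Longrightarrow>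
   vel Phi XJ Xq v1 q qd j = vel Phi XJ Xq v1 q' qd' j"
proof (induction j)
  case (Suc j)
  then show ?case
    by (cases j) auto
qed simp

locale floating_chain =
  fixes N :: nat and Phi :: "nat \<Rightarrow> sv" and XJ :: "nat \<Rightarrow> smat" and Xq :: "nat \<Rightarrow> real \<Rightarrow> smat"
  assumes base: "1 \<le> N"
    and joint_stransform: "\<And>i. i \<in> {2..N} \<Longrightarrow> is_stransform (XJ i)"
    and joint_at_zero: "\<And>i. i \<in> {2..N} \<Longrightarrow> Xq i 0 = mat 1"
    and joint_ode:
      "\<And>i x. i \<in> {2..N} \<Longrightarrow> (Xq i has_vector_derivative - (svcross (Phi i) ** Xq i x)) (at x)"
begin

definition body_form :: "(nat \<Rightarrow> real^10) \<Rightarrow> sv \<Rightarrow> (nat \<Rightarrow> real) \<Rightarrow> (nat \<Rightarrow> real) \<Rightarrow> nat \<Rightarrow> real"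
  where "body_form dp v1 q qd j =
           vel Phi XJ Xq v1 q qd j \<bullet> (inertia_hat (dp j) *v vel Phi XJ Xq v1 q qd j)"

definition kinetic_form :: "(nat \<Rightarrow> real^10) \<Rightarrow> sv \<Rightarrow> (nat \<Rightarrow> real) \<Rightarrow> (nat \<Rightarrow> real) \<Rightarrow> real"
  where "kinetic_form dp v1 q qd = (\<Sum>j=1..N. body_form dp v1 q qd j)"

lemma mem_param_nullspace_iff:
  "dp \<in> param_nullspace N Phi XJ Xq \<longleftrightarrow> dp \<in> params N \<and> (\<forall>v1 q qd. kinetic_form dp v1 q qd = 0)"
  by (simp add: param_nullspace_def kinetic_form_def body_form_def)

lemma kinetic_form_sum:
  "kinetic_form (\<lambda>j. \<Sum>i\<in>I. t i j) v1 q qd = (\<Sum>i\<in>I. kinetic_form (t i) v1 q qd)"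
  unfolding kinetic_form_def body_form_def
  by (simp add: linear_sum[OF linear_inertia_hat] matrix_vector_mult_sum_left inner_sum_right sum.swap[of _ I])

lemma kinetic_form_diff:
  "kinetic_form (\<lambda>j. s j - t j) v1 q qd = kinetic_form s v1 q qd - kinetic_form t v1 q qd"
  unfolding kinetic_form_def body_form_def
  by (simp add: linear_diff[OF linear_inertia_hat] matrix_vector_mult_diff_rdistrib
      inner_diff_right sum_subtractf)

lemma kinetic_form_upto:
  assumes "K \<le> N" and "\<forall>j>K. dp j = 0"
  shows "kinetic_form dp v1 q qd = (\<Sum>j=1..K. body_form dp v1 q qd j)"
  unfolding kinetic_form_def
  by (rule sum.mono_neutral_right) (use assms in \<open>auto simp: body_form_def\<close>)

lemma kinetic_form_transfer:
  assumes i: "i \<in> {2..N}" and t: "t \<in> transfer_space N Phi XJ i"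
  shows "kinetic_form t v1 q qd = 0"
proof -
  define A where "A = inertia_hat (t i)"
  have prev: "inertia_hat (t (i - 1)) = - (transpose (XJ i) ** A ** XJ i)"
    and Phi: "Phi i v* A = 0"
    and comm: "transpose (svcross (Phi i)) ** A + A ** svcross (Phi i) = 0"
    and rest: "\<forall>j\<in>{1..N}. j \<notin> {i, i - 1} \<longrightarrow> inertia_hat (t j) = 0"
    using t unfolding transfer_space_def A_def by auto
  have sym: "transpose A = A"
    by (simp add: A_def)
  have inv: "transpose (Xq i x) ** A ** Xq i x = A" for x
    using congruence_invariant_iff[OF joint_ode[OF i] joint_at_zero[OF i]] comm by blast
  define u where "u = XJ i *v vel Phi XJ Xq v1 q qd (i - 1)"
  have "kinetic_form t v1 q qd = (\<Sum>j\<in>{i - 1, i}. body_form t v1 q qd j)"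
    unfolding kinetic_form_def
    by (rule sum.mono_neutral_right) (use i rest in \<open>auto simp: body_form_def\<close>)
  also have "\<dots> = body_form t v1 q qd (i - 1) + body_form t v1 q qd i"
    using i by (subst sum.insert) auto
  also have "body_form t v1 q qd (i - 1) = - (u \<bullet> (A *v u))"
    unfolding body_form_def prev
    by (simp add: u_def quadratic_form_congruence matrix_vector_mult_minus_left)
  also have "body_form t v1 q qd i = u \<bullet> (A *v u)"
  proof -
    have "vel Phi XJ Xq v1 q qd i = Xq i (q i) *v u + qd i *\<^sub>R Phi i"
      using i vel_step[of i] by (simp add: u_def matrix_vector_mul_assoc)
    then show ?thesis
      by (simp add: body_form_def A_def[symmetric] quadratic_form_joint_invariant[OF sym Phi inv])
  qed
  finally show ?thesis
    by simp
qed

lemma vel_at_rest_surj: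
  assumes "1 \<le> k" and "k \<le> N"
  shows "\<exists>v1. vel Phi XJ Xq v1 (\<lambda>_. 0) (\<lambda>_. 0) k = u"
  using assms
proof (induction k arbitrary: u rule: dec_induct)
  case (step k)
  then have K: "Suc k \<in> {2..N}"
    by auto
  obtain Y where Y: "XJ (Suc k) ** Y = mat 1"
    using stransform_right_inverse[OF joint_stransform[OF K]] by blast
  obtain v1 where "vel Phi XJ Xq v1 (\<lambda>_. 0) (\<lambda>_. 0) k = Y *v u"
    using step.IH[of "Y *v u"] step.prems by auto
  then have "vel Phi XJ Xq v1 (\<lambda>_. 0) (\<lambda>_. 0) (Suc k) = u"
    using vel_step[of "Suc k"] K joint_at_zero[OF K]
    by (simp add: matrix_vector_mul_assoc Y)
  then show ?case ..
qed simp

lemma last_body_form_invariant: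
  assumes dp: "dp \<in> param_nullspace N Phi XJ Xq" and K: "K \<in> {2..N}" and above: "\<forall>j>K. dp j = 0"
  shows "(Xq K a *v u + s *\<^sub>R Phi K) \<bullet> (inertia_hat (dp K) *v (Xq K a *v u + s *\<^sub>R Phi K))
         = u \<bullet> (inertia_hat (dp K) *v u)"
proof -
  define rest :: "nat \<Rightarrow> real" where "rest = (\<lambda>_. 0)"
  define q where "q = rest(K := a)"
  define qd where "qd = rest(K := s)"
  obtain v1 where v1: "vel Phi XJ Xq v1 rest rest K = u"
    using vel_at_rest_surj[of K u] K unfolding rest_def by auto
  have lower: "vel Phi XJ Xq v1 q qd j = vel Phi XJ Xq v1 rest rest j" if "j < K" for j
    by (rule vel_cong) (use that in \<open>auto simp: q_def qd_def\<close>)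
  have "vel Phi XJ Xq v1 rest rest K = XJ K *v vel Phi XJ Xq v1 rest rest (K - 1)"
    using vel_step[of K] K joint_at_zero[OF K] by (simp add: rest_def)
  then have "vel Phi XJ Xq v1 q qd K = Xq K a *v u + s *\<^sub>R Phi K"
    using vel_step[of K] K lower[of "K - 1"] v1
    by (simp add: q_def qd_def matrix_vector_mul_assoc)
  moreover have "(\<Sum>j=1..K - 1. body_form dp v1 q qd j) = (\<Sum>j=1..K - 1. body_form dp v1 rest rest j)"
    using K by (intro sum.cong) (auto simp: body_form_def lower)
  moreover have "(\<Sum>j=1..K. body_form dp v1 q' qd' j) =
      (\<Sum>j=1..K - 1. body_form dp v1 q' qd' j) + body_form dp v1 q' qd' K" for q' qd'
    using K by (cases K) auto
  moreover have "(\<Sum>j=1..K. body_form dp v1 q' qd' j) = 0" for q' qd'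
    using dp K above kinetic_form_upto[of K dp v1 q' qd'] by (simp add: mem_param_nullspace_iff)
  ultimately show ?thesis
    by (metis add_left_cancel body_form_def v1)
qed

lemma last_body_joint_conditions:
  assumes dp: "dp \<in> param_nullspace N Phi XJ Xq" and K: "K \<in> {2..N}" and above: "\<forall>j>K. dp j = 0"
  shows "Phi K v* inertia_hat (dp K) = 0"
    and "transpose (svcross (Phi K)) ** inertia_hat (dp K) + inertia_hat (dp K) ** svcross (Phi K) = 0"
proof -
  define A where "A = inertia_hat (dp K)"
  have sym: "transpose A = A"
    by (simp add: A_def)
  note invariant = last_body_form_invariant[OF dp K above, folded A_def]
  have "Phi K \<bullet> (A *v u) = 0" for u
    using invariant[of 0 u 1] invariant[of 0 u "-1"] joint_at_zero[OF K]
      quadratic_form_add_scaleR[OF sym, of u 1 "Phi K"] quadratic_form_add_scaleR[OF sym, of u "-1" "Phi K"]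
    by simp
  from this[of "Phi K v* A"] show "Phi K v* inertia_hat (dp K) = 0"
    by (simp add: A_def[symmetric] dot_lmul_matrix[symmetric])
  have "transpose (Xq K a) ** A ** Xq K a - A = 0" for a
    using invariant[of a _ 0]
    by (intro symmetric_quadratic_form_eq_0)
      (simp_all add: sym transpose_diff matrix_transpose_mul matrix_mul_assoc
        quadratic_form_congruence matrix_vector_mult_diff_rdistrib inner_diff_right)
  then show "transpose (svcross (Phi K)) ** inertia_hat (dp K) + inertia_hat (dp K) ** svcross (Phi K) = 0"
    using congruence_invariant_iff[OF joint_ode[OF K] joint_at_zero[OF K], of A] by (simp add: A_def)
qed

lemma last_body_transfer:
  assumes dp: "dp \<in> param_nullspace N Phi XJ Xq" and K: "K \<in> {2..N}" and above: "\<forall>j>K. dp j = 0"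
  obtains s where "s \<in> transfer_space N Phi XJ K" and "s K = dp K" and "\<forall>j>K. s j = 0"
proof -
  obtain p where p: "inertia_hat p = transpose (XJ K) ** inertia_hat (dp K) ** XJ K"
    using ex_inertia_hat_congruence[OF joint_stransform[OF K]] by blast
  define s where "s j = (if j = K then dp K else if j = K - 1 then - p else 0)" for j
  have "s \<in> transfer_space N Phi XJ K"
    using K last_body_joint_conditions[OF dp K above] p
    by (auto simp: transfer_space_def params_def s_def linear_neg[OF linear_inertia_hat])
  moreover have "s K = dp K" and "\<forall>j>K. s j = 0"
    by (auto simp: s_def)
  ultimately show ?thesis
    using that by blast
qed

lemma nullspace_first_body:
  assumes dp: "dp \<in> param_nullspace N Phi XJ Xq" and above: "\<forall>j>1. dp j = 0"
  shows "dp = (\<lambda>j. 0)"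
proof -
  have "v1 \<bullet> (inertia_hat (dp 1) *v v1) = 0" for v1
    using kinetic_form_upto[of 1 dp v1 "\<lambda>_. 0" "\<lambda>_. 0"] base above dp
    by (simp add: mem_param_nullspace_iff body_form_def)
  then have "dp 1 = 0"
    using symmetric_quadratic_form_eq_0[of "inertia_hat (dp 1)"] by simp
  moreover have "dp 0 = 0"
    using dp by (simp add: mem_param_nullspace_iff params_def)
  ultimately show ?thesis
    using above by (metis less_one linorder_neqE_nat)
qed

lemma transfer_sums_subset_nullspace: "transfer_sums N Phi XJ \<subseteq> param_nullspace N Phi XJ Xq"
  by (auto simp: transfer_sums_def mem_param_nullspace_iff kinetic_form_sum kinetic_form_transfer
      params_def transfer_space_def intro!: sum.neutral)

lemma nullspace_subset_transfer_sums: "param_nullspace N Phi XJ Xq \<subseteq> transfer_sums N Phi XJ"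
proof
  fix dp assume dp: "dp \<in> param_nullspace N Phi XJ Xq"
  have "dp \<in> transfer_sums N Phi XJ"
    if "1 \<le> k" "k \<le> N" "dp \<in> param_nullspace N Phi XJ Xq" "\<forall>j>k. dp j = 0" for k dp
    using that
  proof (induction k arbitrary: dp rule: dec_induct)
    case base
    then show ?case
      using nullspace_first_body zero_mem_transfer_sums by auto
  next
    case (step k)
    have K: "Suc k \<in> {2..N}"
      using step.hyps step.prems by auto
    obtain s where s: "s \<in> transfer_space N Phi XJ (Suc k)" and sK: "s (Suc k) = dp (Suc k)"
      and s_above: "\<forall>j>Suc k. s j = 0"
      using last_body_transfer[OF step.prems(2) K step.prems(3)] .
    have "(\<lambda>j. dp j - s j) \<in> transfer_sums N Phi XJ"
    proof (rule step.IH)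
      show "k \<le> N"
        using step.prems(1) by simp
      show "(\<lambda>j. dp j - s j) \<in> param_nullspace N Phi XJ Xq"
        using step.prems(2) s kinetic_form_transfer[OF K s]
        by (auto simp: mem_param_nullspace_iff kinetic_form_diff params_def transfer_space_def)
      show "\<forall>j>k. dp j - s j = 0"
      proof (intro allI impI)
        fix j assume "k < j"
        then consider "j = Suc k" | "Suc k < j"
          by linarith
        then show "dp j - s j = 0"
          using sK s_above step.prems(3) by cases auto
      qed
    qed
    from transfer_sums_add_transfer[OF this K s] show ?case
      by simp
  qed
  moreover have "\<forall>j>N. dp j = 0"
    using dp by (simp add: mem_param_nullspace_iff params_def)
  ultimately show "dp \<in> transfer_sums N Phi XJ"
    using dp base by blast
qed

theorem nullspace_direct_sum:
  "is_direct_sum (param_nullspace N Phi XJ Xq) (transfer_space N Phi XJ) {2..N}"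
proof -
  have "param_nullspace N Phi XJ Xq = transfer_sums N Phi XJ"
    using nullspace_subset_transfer_sums transfer_sums_subset_nullspace by blast
  then show ?thesis
    unfolding is_direct_sum_def transfer_sums_def using transfer_sum_eq_0 by blast
qed

end

theorem theorem1:
  fixes N :: nat
    and Phi :: "nat \<Rightarrow> sv"
    and XJ :: "nat \<Rightarrow> smat"
    and Xq :: "nat \<Rightarrow> real \<Rightarrow> smat"
  assumes "1 \<le> N"
    and "\<forall>i\<in>{2..N}. Phi i \<noteq> 0"
    and "\<forall>i\<in>{2..N}. is_stransform (XJ i)"
    and "\<forall>i\<in>{2..N}. \<forall>x. is_stransform (Xq i x)"
    and "\<forall>i\<in>{2..N}. Xq i 0 = mat 1"
    and "\<forall>i\<in>{2..N}. \<forall>x. (Xq i has_vector_derivative (- (svcross (Phi i) ** Xq i x))) (at x)"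
  shows "is_direct_sum (param_nullspace N Phi XJ Xq) (transfer_space N Phi XJ) {2..N}"
proof -
  interpret floating_chain N Phi XJ Xq
    using assms(1,3,5,6) by unfold_locales auto
  show ?thesis
    by (rule nullspace_direct_sum)
qed

end
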